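(* Let $n\ge 2$ and let $k_1,\dots,k_n$, $a_1,\dots,a_{n-1}$, $b_1,\dots,b_n$ be real or complex numbers. Let $A_2$ be the $n\times n$ matrix with entries $$(A_2)_{ij}=\begin{cases} k_j b_j, & i\le j,\\ k_i a_j, & i>j.\end{cases}$$ Then $$\det(A_2)=k_nb_n\,(k_1b_1-k_2a_1)(k_2b_2-k_3a_2)\cdots(k_{n-1}b_{n-1}-k_na_{n-1}).$$ In particular, $A_2$ is singular if $k_n=0$, or $b_n=0$, or $k_ib_i-k_{i+1}a_i=0$ for some $i\in\{1,\dots,n-1\}$. *)

theory Defs
  imports "Jordan_Normal_Form.Determinant"
begin

definition A2 :: "nat \<Rightarrow> (nat \<Rightarrow> 'a::field) \<Rightarrow> (nat \<Rightarrow> 'a) \<Rightarrow> (nat \<Rightarrow> 'a) \<Rightarrow> 'a mat" where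
  "A2 n k a b = mat n n (\<lambda>(i, j). if i \<le> j then k j * b j else k i * a j)"

end

theory Submission
  imports Defs
begin

text \<open>Subtracting from every row of \<open>A\<^sub>2\<close> the row below it (the last row is kept)
  amounts to multiplying by a unitriangular matrix, so the determinant is unchanged. Above the
  diagonal, rows \<open>i\<close> and \<open>i + 1\<close> agree (both have \<open>k j * b j\<close> in column \<open>j > i\<close>),
  so the new matrix is lower triangular, with diagonal entries \<open>k i * b i - k (i + 1) * a i\<close>
  and finally \<open>k (n - 1) * b (n - 1)\<close>.\<close>

definition row_difference_mat :: "nat \<Rightarrow> 'a::ring_1 mat" where
  "row_difference_mat n = mat n n (\<lambda>(i, j). if j = i then 1 else if j = Suc i then -1 else 0)"

lemma row_difference_mat_carrier [simp]: "row_difference_mat n \<in> carrier_mat n n"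
  by (simp add: row_difference_mat_def)

lemma det_row_difference_mat: "det (row_difference_mat n :: 'a::comm_ring_1 mat) = 1"
proof -
  have "det (row_difference_mat n :: 'a mat) = prod_list (diag_mat (row_difference_mat n))"
    by (rule det_upper_triangular)
      (auto simp: upper_triangular_def row_difference_mat_def)
  also have "\<dots> = 1"
    by (simp add: prod_list_diag_prod row_difference_mat_def)
  finally show ?thesis .
qed

lemma row_difference_mat_mult_index:
  fixes A :: "'a::ring_1 mat"
  assumes "A \<in> carrier_mat n m" and "i < n" and "j < m"
  shows "(row_difference_mat n * A) $$ (i, j)
           = A $$ (i, j) - (if Suc i < n then A $$ (Suc i, j) else 0)"
proof -
  have "(row_difference_mat n * A) $$ (i, j)
          = (\<Sum>l<n. (if l = i then A $$ (l, j) else 0) - (if l = Suc i then A $$ (l, j) else 0))"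
    using assms by (auto simp: row_difference_mat_def scalar_prod_def atLeast0LessThan
                         intro!: sum.cong)
  also have "\<dots> = A $$ (i, j) - (if Suc i < n then A $$ (Suc i, j) else 0)"
    using assms(2) by (simp add: sum_subtractf)
  finally show ?thesis .
qed

lemma det_row_difference_mat_mult:
  fixes A :: "'a::comm_ring_1 mat"
  assumes "A \<in> carrier_mat n n"
  shows "det (row_difference_mat n * A) = det A"
  using assms by (simp add: det_mult[of _ n] det_row_difference_mat)

lemma A2_carrier [simp]: "A2 n k a b \<in> carrier_mat n n"
  by (simp add: A2_def)

lemma A2_index:
  "i < n \<Longrightarrow> j < n \<Longrightarrow> A2 n k a b $$ (i, j) = (if i \<le> j then k j * b j else k i * a j)"
  by (simp add: A2_def)

lemma row_difference_A2_index:
  assumes "i < n" and "j < n"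
  shows "(row_difference_mat n * A2 n k a b) $$ (i, j)
           = (if i < j then 0
              else (if i = j then k i * b i else k i * a j)
                     - (if Suc i < n then k (Suc i) * a j else 0))"
  using assms by (auto simp: row_difference_mat_mult_index[OF A2_carrier] A2_index)

lemma det_A2_prod:
  "det (A2 n k a b) = (\<Prod>i<n. k i * b i - (if Suc i < n then k (Suc i) * a i else 0))"
proof -
  let ?B = "row_difference_mat n * A2 n k a b"
  have B: "?B \<in> carrier_mat n n"
    by (rule mult_carrier_mat[OF row_difference_mat_carrier A2_carrier])
  have "det (A2 n k a b) = det ?B"
    by (simp add: det_row_difference_mat_mult[OF A2_carrier])
  also have "\<dots> = prod_list (diag_mat ?B)"
    by (rule det_lower_triangular[OF _ B]) (simp add: row_difference_A2_index)
  also have "\<dots> = (\<Prod>i<n. ?B $$ (i, i))"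
    by (simp add: prod_list_diag_prod atLeast0LessThan row_difference_mat_def)
  also have "\<dots> = (\<Prod>i<n. k i * b i - (if Suc i < n then k (Suc i) * a i else 0))"
    by (rule prod.cong) (simp_all add: row_difference_A2_index)
  finally show ?thesis .
qed

theorem mainTheorem4:
  fixes k a b :: "nat \<Rightarrow> 'a::field" and n :: nat
  assumes "n \<ge> 2"
  shows "det (A2 n k a b) = k (n - 1) * b (n - 1) * (\<Prod>i<n - 1. k i * b i - k (Suc i) * a i)"
proof -
  obtain m where n: "n = Suc m"
    using assms by (cases n) auto
  have "(\<Prod>i<m. k i * b i - (if Suc i < n then k (Suc i) * a i else 0))
          = (\<Prod>i<m. k i * b i - k (Suc i) * a i)"
    using n by (intro prod.cong) auto
  then show ?thesis
    using n by (simp add: det_A2_prod mult.commute)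
qed

end
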